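(* Let $\lambda=2/\sqrt5$, let $\eta=i\eta_1+j\eta_2+k\eta_3=a\bar\alpha$ and $H=a\Phi\bar a=iH_1+jH_2+kH_3$ on $\tilde P^-$ (so $H_1=d\eta_1+2\eta_2\wedge\eta_3$ cyclically), and define \[\varphi'=2\lambda\sum_{k=1}^3H_k\wedge\eta_k+\lambda^3\,\eta_1\wedge\eta_2\wedge\eta_3 .\] Then $\varphi'=-\varphi$, where $\varphi=2\lambda\sum_k\Phi_k\wedge\beta_k+\lambda^3\beta_1\wedge\beta_2\wedge\beta_3$. Hence $\varphi'$ describes (up to orientation) the same squashed nearly-parallel $G_2$ structure on $\tilde P^-$.
   Context: Quaternion-valued forms: for $\mathbb{H}$-valued forms, $A\wedge B$ multiplies coefficients and wedges; bar is conjugation. Setting: $(M,g_4)$ oriented, locally spin, self-dual Einstein 4-manifold with scalar curvature 12; $\Sigma^-$ its negative spin bundle with fibre coordinate $a\in\mathbb{H}$ relative to a local unit section; connection 1-form $\phi$ ($\mathrm{Im}\,\mathbb{H}$-valued), curvature $\Phi=d\phi+\phi\wedge\phi=i\Phi_1+j\Phi_2+k\Phi_3$; $\alpha=da-a\phi$, $\beta=\bar a\alpha=i\beta_1+j\beta_2+k\beta_3$ on the unit sphere bundle $\tilde P^-=\{|a|=1\}$. *)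

theory Defs
  imports "HOL-Analysis.Analysis"
begin

datatype quat = Quat (qre: real) (qi: real) (qj: real) (qk: real)

definition qmult :: "quat \<Rightarrow> quat \<Rightarrow> quat" (infixl "\<cdot>q" 70) where
  "p \<cdot>q q = Quat (qre p * qre q - qi p * qi q - qj p * qj q - qk p * qk q)
                  (qre p * qi q + qi p * qre q + qj p * qk q - qk p * qj q)
                  (qre p * qj q - qi p * qk q + qj p * qre q + qk p * qi q)
                  (qre p * qk q + qi p * qj q - qj p * qi q + qk p * qre q)"

definition qsub :: "quat \<Rightarrow> quat \<Rightarrow> quat" where
  "qsub p q = Quat (qre p - qre q) (qi p - qi q) (qj p - qj q) (qk p - qk q)"

definition qconj :: "quat \<Rightarrow> quat" where
  "qconj p = Quat (qre p) (- qi p) (- qj p) (- qk p)"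

definition qnorm :: "quat \<Rightarrow> real" where
  "qnorm p = sqrt ((qre p)\<^sup>2 + (qi p)\<^sup>2 + (qj p)\<^sup>2 + (qk p)\<^sup>2)"

definition qim :: "nat \<Rightarrow> quat \<Rightarrow> real" where
  "qim n p = (if n = 1 then qi p else if n = 2 then qj p else qk p)"

text \<open>An H-valued 1-form at a point: each real component is a real-linear functional
  on the tangent space.\<close>
definition qlinear :: "('v::real_vector \<Rightarrow> quat) \<Rightarrow> bool" where
  "qlinear f \<longleftrightarrow> linear (\<lambda>v. qre (f v)) \<and> linear (\<lambda>v. qi (f v))
                 \<and> linear (\<lambda>v. qj (f v)) \<and> linear (\<lambda>v. qk (f v))"

definition qtwoform :: "('v::real_vector \<Rightarrow> 'v \<Rightarrow> quat) \<Rightarrow> bool" where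
  "qtwoform F \<longleftrightarrow> (\<forall>u. qlinear (F u)) \<and> (\<forall>u v. F u v = qsub (Quat 0 0 0 0) (F v u))"

text \<open>Convention: (\<theta>\<wedge>\<psi>)(u,v) = \<theta>(u)\<psi>(v) - \<theta>(v)\<psi>(u); all wedges below follow it.\<close>
definition wedge21 :: "('v \<Rightarrow> 'v \<Rightarrow> real) \<Rightarrow> ('v \<Rightarrow> real) \<Rightarrow> 'v \<Rightarrow> 'v \<Rightarrow> 'v \<Rightarrow> real" where
  "wedge21 \<omega> \<theta> u v w = \<omega> u v * \<theta> w - \<omega> u w * \<theta> v + \<omega> v w * \<theta> u"

definition wedge111 :: "('v \<Rightarrow> real) \<Rightarrow> ('v \<Rightarrow> real) \<Rightarrow> ('v \<Rightarrow> real) \<Rightarrow> 'v \<Rightarrow> 'v \<Rightarrow> 'v \<Rightarrow> real" where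
  "wedge111 x y z u v w =
     x u * (y v * z w - y w * z v) - x v * (y u * z w - y w * z u) + x w * (y u * z v - y v * z u)"

definition g2form :: "real \<Rightarrow> ('v \<Rightarrow> 'v \<Rightarrow> quat) \<Rightarrow> ('v \<Rightarrow> quat) \<Rightarrow> 'v \<Rightarrow> 'v \<Rightarrow> 'v \<Rightarrow> real" where
  "g2form lam Om th u v w =
     2 * lam * (\<Sum>n\<in>{1,2,3::nat}. wedge21 (\<lambda>x y. qim n (Om x y)) (\<lambda>x. qim n (th x)) u v w)
     + lam ^ 3 * wedge111 (\<lambda>x. qim 1 (th x)) (\<lambda>x. qim 2 (th x)) (\<lambda>x. qim 3 (th x)) u v w"

end

theory Submission
  imports Defs
begin

text \<open>Conjugation \<open>p \<mapsto> a p conj(a)\<close> by a unit quaternion acts on \<open>Im H = \<real>\<^sup>3\<close> as a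
  rotation \<open>R\<close>, so \<open>H = R \<Phi>\<close>. Since \<open>\<alpha> = a \<beta>\<close>, also \<open>\<eta> = a conj(\<beta>) conj(a)\<close>, whose
  imaginary part is \<open>-R \<beta>\<close>. The 3-form is built from the inner and the triple product on
  \<open>\<real>\<^sup>3\<close>, both invariant under rotations, and it is odd in its 1-form; hence \<open>\<phi>' = -\<phi>\<close>.\<close>

definition im_vec :: "quat \<Rightarrow> real^3" where
  "im_vec p = vector [qi p, qj p, qk p]"

definition rot_matrix :: "quat \<Rightarrow> real^3^3" where
  "rot_matrix a = (let w = qre a; x = qi a; y = qj a; z = qk a in
     vector [vector [w\<^sup>2 + x\<^sup>2 - y\<^sup>2 - z\<^sup>2, 2 * (x * y - w * z), 2 * (x * z + w * y)],
             vector [2 * (x * y + w * z), w\<^sup>2 - x\<^sup>2 + y\<^sup>2 - z\<^sup>2, 2 * (y * z - w * x)],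
             vector [2 * (x * z - w * y), 2 * (y * z + w * x), w\<^sup>2 - x\<^sup>2 - y\<^sup>2 + z\<^sup>2]])"

lemma qmult_assoc: "p \<cdot>q q \<cdot>q r = p \<cdot>q (q \<cdot>q r)"
  by (simp add: qmult_def algebra_simps)

lemma qconj_qmult: "qconj (p \<cdot>q q) = qconj q \<cdot>q qconj p"
  by (simp add: qmult_def qconj_def algebra_simps)

lemma qnorm_eq_1_iff: "qnorm a = 1 \<longleftrightarrow> (qre a)\<^sup>2 + (qi a)\<^sup>2 + (qj a)\<^sup>2 + (qk a)\<^sup>2 = 1"
  by (simp add: qnorm_def)

lemma qmult_qconj_cancel_left:
  assumes "qnorm a = 1"
  shows "a \<cdot>q (qconj a \<cdot>q p) = p"
proof -
  obtain w x y z where a: "a = Quat w x y z" by (cases a)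
  let ?s = "w\<^sup>2 + x\<^sup>2 + y\<^sup>2 + z\<^sup>2"
  have "a \<cdot>q (qconj a \<cdot>q p) = Quat (?s * qre p) (?s * qi p) (?s * qj p) (?s * qk p)"
    by (simp add: a qmult_def qconj_def power2_eq_square algebra_simps)
  moreover have "?s = 1" using assms by (simp add: qnorm_eq_1_iff a)
  ultimately show ?thesis by simp
qed

lemma im_vec_qconj: "im_vec (qconj p) = - im_vec p"
  by (simp add: im_vec_def qconj_def vec_eq_iff forall_3)

lemma im_vec_conj_action: "im_vec (a \<cdot>q p \<cdot>q qconj a) = rot_matrix a *v im_vec p"
  by (simp add: vec_eq_iff forall_3 matrix_vector_mult_def sum_3 im_vec_def rot_matrix_def Let_def
      qmult_def qconj_def power2_eq_square algebra_simps)

lemma rotation_matrix_rot_matrix: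
  assumes "qnorm a = 1"
  shows "rotation_matrix (rot_matrix a)"
proof -
  obtain w x y z where a: "a = Quat w x y z" by (cases a)
  have s: "w\<^sup>2 + x\<^sup>2 + y\<^sup>2 + z\<^sup>2 = 1" using assms by (simp add: qnorm_eq_1_iff a)
  have "transpose (rot_matrix a) ** rot_matrix a = (w\<^sup>2 + x\<^sup>2 + y\<^sup>2 + z\<^sup>2)\<^sup>2 *\<^sub>R mat 1"
    by (simp add: a vec_eq_iff forall_3 matrix_matrix_mult_def transpose_def mat_def sum_3 rot_matrix_def
        power2_eq_square algebra_simps)
  moreover have "det (rot_matrix a) = (w\<^sup>2 + x\<^sup>2 + y\<^sup>2 + z\<^sup>2) ^ 3"
    by (simp add: a det_3 rot_matrix_def power2_eq_square power3_eq_cube algebra_simps)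
  ultimately show ?thesis
    by (simp add: s rotation_matrix_def orthogonal_matrix)
qed

lemma im_vec_qmult_qconj:
  assumes "qnorm a = 1"
  shows "im_vec (a \<cdot>q qconj c) = - (rot_matrix a *v im_vec (qconj a \<cdot>q c))"
proof -
  have "a \<cdot>q qconj c = a \<cdot>q qconj (qconj a \<cdot>q c) \<cdot>q qconj a"
    using qmult_qconj_cancel_left[OF assms, of c] by (metis qconj_qmult qmult_assoc)
  then show ?thesis
    by (simp add: im_vec_conj_action im_vec_qconj linear_neg[OF matrix_vector_mul_linear])
qed

lemma inner_orthogonal_matrix:
  fixes Q :: "real^'n^'n"
  assumes "orthogonal_matrix Q"
  shows "(Q *v x) \<bullet> (Q *v y) = x \<bullet> y"
  using assms orthogonal_transformation_matrix[of "(*v) Q"]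
  by (simp add: orthogonal_transformation_def)

lemma g2form_eq_inner_cross3:
  "g2form lam Om th u v w =
     2 * lam * (im_vec (Om u v) \<bullet> im_vec (th w) - im_vec (Om u w) \<bullet> im_vec (th v)
                + im_vec (Om v w) \<bullet> im_vec (th u))
     + lam ^ 3 * (im_vec (th u) \<bullet> cross3 (im_vec (th v)) (im_vec (th w)))"
  by (simp add: g2form_def wedge21_def wedge111_def qim_def im_vec_def cross3_def inner_vec_def sum_3
      algebra_simps)

lemma g2form_rotation_odd:
  assumes Q: "rotation_matrix Q"
    and Om: "\<And>u v. im_vec (Om' u v) = Q *v im_vec (Om u v)"
    and th: "\<And>v. im_vec (th' v) = - (Q *v im_vec (th v))"
  shows "g2form lam Om' th' u v w = - g2form lam Om th u v w"
proof -
  have orth: "orthogonal_matrix Q" using Q by (simp add: rotation_matrix_def)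
  have "(Q *v x) \<bullet> cross3 (Q *v y) (Q *v z) = x \<bullet> cross3 y z" for x y z
    by (simp add: cross_rotation_matrix[OF Q] inner_orthogonal_matrix[OF orth])
  then show ?thesis
    by (simp add: g2form_eq_inner_cross3 Om th inner_orthogonal_matrix[OF orth] algebra_simps)
qed

text \<open>The identity holds pointwise for any values of the forms: only \<open>|a| = 1\<close> is needed.\<close>

theorem proposition2p4:
  fixes a :: quat
    and da phi :: "'v::real_vector \<Rightarrow> quat"
    and Phi :: "'v \<Rightarrow> 'v \<Rightarrow> quat"
  assumes unit: "qnorm a = 1"
    and da_lin: "qlinear da"
    and tangent: "\<forall>v. qre (qconj a \<cdot>q da v) = 0"
    and phi_lin: "qlinear phi" and phi_im: "\<forall>v. qre (phi v) = 0"
    and Phi_form: "qtwoform Phi" and Phi_im: "\<forall>u v. qre (Phi u v) = 0"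
  shows
    "let lam = 2 / sqrt 5;
         alpha = (\<lambda>v. qsub (da v) (a \<cdot>q phi v));
         beta = (\<lambda>v. qconj a \<cdot>q alpha v);
         eta = (\<lambda>v. a \<cdot>q qconj (alpha v));
         H = (\<lambda>u v. a \<cdot>q Phi u v \<cdot>q qconj a)
     in \<forall>u v w. g2form lam H eta u v w = - g2form lam Phi beta u v w"
proof (unfold Let_def, intro allI)
  fix u v w
  show "g2form (2 / sqrt 5) (\<lambda>u v. a \<cdot>q Phi u v \<cdot>q qconj a)
          (\<lambda>v. a \<cdot>q qconj (qsub (da v) (a \<cdot>q phi v))) u v w =
        - g2form (2 / sqrt 5) Phi (\<lambda>v. qconj a \<cdot>q qsub (da v) (a \<cdot>q phi v)) u v w"
    by (rule g2form_rotation_odd[OF rotation_matrix_rot_matrix[OF unit]])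
      (simp_all add: im_vec_conj_action im_vec_qmult_qconj[OF unit])
qed

end
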